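(* Let $L\subseteq Q$ be an extension of Lie algebras such that $Q$ is a weak algebra of quotients of $L$, and let $I$ be an ideal of $L$ with $\mathrm{Ann}_L(I)=0$. Then $\mathrm{r.ann}_{A(Q)}(A_Q(I))=0$.
   Context: Lie algebras over a commutative unital ring $\Phi$. $\mathrm{ad}_x(y)=[x,y]$; $A(Q)$ is the associative subalgebra of $\mathrm{End}_\Phi(Q)$ generated by all $\mathrm{ad}_x$, $x\in Q$; for $I\subseteq L\subseteq Q$, $A_Q(I)$ is the subalgebra of $A(Q)$ generated by $\{\mathrm{ad}_x:x\in I\}$. $\mathrm{Ann}_L(X)=\{a\in L:[a,X]=0\}$. For an associative algebra $B$ and $X\subseteq B$, $\mathrm{r.ann}_B(X)=\{b\in B:Xb=0\}$. $Q$ is a weak algebra of quotients of $L$ if for every nonzero $q\in Q$ there is $x\in L$ with $0\ne[x,q]\in L$. *)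

theory Defs
  imports Main "HOL.Modules"
begin

locale lie_algebra = module scale
  for scale :: "'a::comm_ring_1 \<Rightarrow> 'b::ab_group_add \<Rightarrow> 'b" +
  fixes br :: "'b \<Rightarrow> 'b \<Rightarrow> 'b"
  assumes br_add_left: "br (x + y) z = br x z + br y z"
    and br_add_right: "br x (y + z) = br x y + br x z"
    and br_scale_left: "br (scale c x) y = scale c (br x y)"
    and br_scale_right: "br x (scale c y) = scale c (br x y)"
    and br_alt: "br x x = 0"
    and jacobi: "br x (br y z) + br y (br z x) + br z (br x y) = 0"

definition submodule :: "('a::comm_ring_1 \<Rightarrow> 'b::ab_group_add \<Rightarrow> 'b) \<Rightarrow> 'b set \<Rightarrow> bool" where
  "submodule scale S \<longleftrightarrow> 0 \<in> S \<and> (\<forall>x\<in>S. \<forall>y\<in>S. x + y \<in> S) \<and> (\<forall>c. \<forall>x\<in>S. scale c x \<in> S)"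

definition lie_subalgebra :: "('a::comm_ring_1 \<Rightarrow> 'b::ab_group_add \<Rightarrow> 'b) \<Rightarrow> ('b \<Rightarrow> 'b \<Rightarrow> 'b) \<Rightarrow> 'b set \<Rightarrow> bool" where
  "lie_subalgebra scale br L \<longleftrightarrow> submodule scale L \<and> (\<forall>x\<in>L. \<forall>y\<in>L. br x y \<in> L)"

definition lie_ideal :: "('a::comm_ring_1 \<Rightarrow> 'b::ab_group_add \<Rightarrow> 'b) \<Rightarrow> ('b \<Rightarrow> 'b \<Rightarrow> 'b) \<Rightarrow> 'b set \<Rightarrow> 'b set \<Rightarrow> bool" where
  "lie_ideal scale br I L \<longleftrightarrow> I \<subseteq> L \<and> submodule scale I \<and> (\<forall>x\<in>L. \<forall>y\<in>I. br x y \<in> I)"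

text \<open>The whole Lie algebra (carrier UNIV) is a weak algebra of quotients of L.\<close>
definition weak_quotients :: "('b::ab_group_add \<Rightarrow> 'b \<Rightarrow> 'b) \<Rightarrow> 'b set \<Rightarrow> bool" where
  "weak_quotients br L \<longleftrightarrow> (\<forall>q. q \<noteq> 0 \<longrightarrow> (\<exists>x\<in>L. br x q \<noteq> 0 \<and> br x q \<in> L))"

definition Ann :: "('b::zero \<Rightarrow> 'b \<Rightarrow> 'b) \<Rightarrow> 'b set \<Rightarrow> 'b set \<Rightarrow> 'b set" where
  "Ann br L X = {a \<in> L. \<forall>x\<in>X. br a x = 0}"

definition ad :: "('b \<Rightarrow> 'b \<Rightarrow> 'b) \<Rightarrow> 'b \<Rightarrow> 'b \<Rightarrow> 'b" where
  "ad br x = (\<lambda>y. br x y)"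

text \<open>The (non-unital) associative subalgebra of End(Q) generated by a set S of endomorphisms.\<close>
inductive_set gen_alg :: "('a::comm_ring_1 \<Rightarrow> 'b::ab_group_add \<Rightarrow> 'b) \<Rightarrow> ('b \<Rightarrow> 'b) set \<Rightarrow> ('b \<Rightarrow> 'b) set"
  for scale :: "'a::comm_ring_1 \<Rightarrow> 'b::ab_group_add \<Rightarrow> 'b" and S :: "('b \<Rightarrow> 'b) set" where
  gen: "f \<in> S \<Longrightarrow> f \<in> gen_alg scale S"
| zero: "(\<lambda>_. 0) \<in> gen_alg scale S"
| add: "f \<in> gen_alg scale S \<Longrightarrow> g \<in> gen_alg scale S \<Longrightarrow> (\<lambda>v. f v + g v) \<in> gen_alg scale S"
| smult: "f \<in> gen_alg scale S \<Longrightarrow> (\<lambda>v. scale c (f v)) \<in> gen_alg scale S"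
| comp: "f \<in> gen_alg scale S \<Longrightarrow> g \<in> gen_alg scale S \<Longrightarrow> f \<circ> g \<in> gen_alg scale S"

text \<open>A_Q(X): subalgebra of A(Q) generated by ad_x, x in X; A(Q) = A_Q(UNIV).\<close>
definition A_alg :: "('a::comm_ring_1 \<Rightarrow> 'b::ab_group_add \<Rightarrow> 'b) \<Rightarrow> ('b \<Rightarrow> 'b \<Rightarrow> 'b) \<Rightarrow> 'b set \<Rightarrow> ('b \<Rightarrow> 'b) set" where
  "A_alg scale br X = gen_alg scale (ad br ` X)"

definition rann :: "('b \<Rightarrow> 'b::zero) set \<Rightarrow> ('b \<Rightarrow> 'b) set \<Rightarrow> ('b \<Rightarrow> 'b) set" where
  "rann B X = {b \<in> B. \<forall>a\<in>X. a \<circ> b = (\<lambda>_. 0)}"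

end

theory Submission
  imports Defs
begin

text \<open>The key fact is that \<open>Ann\<^sub>Q(I) = 0\<close>. If \<open>[I, q] = 0\<close> and \<open>y \<in> L\<close>, then Jacobi gives
  \<open>[x, [y, q]] = [y, [x, q]] + [[x, y], q] = 0\<close> for \<open>x \<in> I\<close>, because \<open>[x, y] \<in> I\<close>; so \<open>Ann\<^sub>Q(I)\<close>
  is stable under \<open>ad\<^sub>L\<close>. For \<open>q \<noteq> 0\<close> the weak quotient property gives \<open>y \<in> L\<close> with
  \<open>0 \<noteq> [y, q] \<in> L\<close>, which would be a nonzero element of \<open>Ann\<^sub>L(I)\<close>. Finally, if \<open>\<mu>\<close> lies in the
  right annihilator of \<open>A\<^sub>Q(I)\<close>, then \<open>ad\<^sub>x \<mu> = 0\<close> for all \<open>x \<in> I\<close>, i.e. every value \<open>\<mu> q\<close> lies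
  in \<open>Ann\<^sub>Q(I) = 0\<close>.\<close>

context lie_algebra
begin

lemma module_hom_br_right: "module_hom scale scale (br x)"
  by unfold_locales (rule br_add_right br_scale_right)+

lemma br_zero_right [simp]: "br x 0 = 0"
  using module_hom.zero[OF module_hom_br_right] .

lemma br_minus_right: "br x (- y) = - br x y"
  using module_hom.neg[OF module_hom_br_right] .

lemma br_anticomm: "br y x = - br x y"
proof -
  have "0 = br (x + y) (x + y)" by (simp add: br_alt)
  also have "\<dots> = br x x + br x y + (br y x + br y y)"
    by (simp add: br_add_left br_add_right add_ac)
  finally show ?thesis by (simp add: br_alt eq_neg_iff_add_eq_0 add.commute)
qed

lemma br_zero_left [simp]: "br 0 x = 0"
  by (subst br_anticomm) simp

lemma br_mem_Ann_ideal:
  assumes "lie_ideal scale br I L" and "y \<in> L" and "a \<in> Ann br UNIV I"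
  shows "br y a \<in> Ann br UNIV I"
  unfolding Ann_def
proof (intro CollectI conjI UNIV_I ballI)
  fix x
  assume "x \<in> I"
  have "br y x \<in> I"
    using assms(1,2) \<open>x \<in> I\<close> unfolding lie_ideal_def by blast
  then have ax: "br a x = 0" and ayx: "br a (br y x) = 0"
    using assms(3) \<open>x \<in> I\<close> unfolding Ann_def by auto
  have "br x (br y a) + br y (br a x) + br a (br x y) = 0"
    by (rule jacobi)
  then have "br x (br y a) = 0"
    using ax ayx br_anticomm[of x y] by (simp add: br_minus_right)
  then show "br (br y a) x = 0"
    by (subst br_anticomm) simp
qed

lemma Ann_ideal_eq_zero_if_weak_quotients:
  assumes "weak_quotients br L" and "lie_ideal scale br I L" and "Ann br L I = {0}"
  shows "Ann br UNIV I = {0}"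
proof -
  have "a = 0" if a: "a \<in> Ann br UNIV I" for a
  proof (rule ccontr)
    assume "a \<noteq> 0"
    then obtain y where y: "y \<in> L" "br y a \<noteq> 0" "br y a \<in> L"
      using assms(1) unfolding weak_quotients_def by blast
    have "br y a \<in> Ann br UNIV I"
      using br_mem_Ann_ideal[OF assms(2) \<open>y \<in> L\<close> a] .
    with y(3) have "br y a \<in> Ann br L I"
      unfolding Ann_def by blast
    with assms(3) y(2) show False by blast
  qed
  moreover have "0 \<in> Ann br UNIV I"
    unfolding Ann_def by simp
  ultimately show ?thesis by blast
qed

lemma gen_alg_ad_map_zero: "f \<in> gen_alg scale (ad br ` X) \<Longrightarrow> f 0 = 0"
  by (induction rule: gen_alg.induct) (auto simp: ad_def)

lemma rann_A_alg_eq_zero_if_Ann_eq_zero: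
  assumes "Ann br UNIV I = {0}"
  shows "rann (A_alg scale br UNIV) (A_alg scale br I) = {(\<lambda>_. 0)}"
proof -
  have "\<mu> = (\<lambda>_. 0)" if \<mu>: "\<mu> \<in> rann (A_alg scale br UNIV) (A_alg scale br I)" for \<mu>
  proof
    fix q
    have "br x (\<mu> q) = 0" if "x \<in> I" for x
    proof -
      have "ad br x \<in> A_alg scale br I"
        using \<open>x \<in> I\<close> unfolding A_alg_def by (auto intro: gen_alg.gen)
      with \<mu> have "ad br x \<circ> \<mu> = (\<lambda>_. 0)"
        unfolding rann_def by auto
      then show ?thesis
        by (metis ad_def comp_apply)
    qed
    then have "\<mu> q \<in> Ann br UNIV I"
      unfolding Ann_def by (auto simp: br_anticomm[of "\<mu> q"])
    with assms show "\<mu> q = 0" by blast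
  qed
  moreover have "(\<lambda>_. 0) \<in> rann (A_alg scale br UNIV) (A_alg scale br I)"
    unfolding rann_def A_alg_def by (auto intro: gen_alg.zero dest: gen_alg_ad_map_zero simp: comp_def)
  ultimately show ?thesis by blast
qed

end

theorem mainTheorem8:
  fixes scale :: "'a::comm_ring_1 \<Rightarrow> 'b::ab_group_add \<Rightarrow> 'b"
    and br :: "'b \<Rightarrow> 'b \<Rightarrow> 'b"
    and L I :: "'b set"
  assumes "lie_algebra scale br"
    and "lie_subalgebra scale br L"
    and "weak_quotients br L"
    and "lie_ideal scale br I L"
    and "Ann br L I = {0}"
  shows "rann (A_alg scale br UNIV) (A_alg scale br I) = {(\<lambda>_. 0)}"
proof -
  interpret lie_algebra scale br by fact
  have "Ann br UNIV I = {0}"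
    using Ann_ideal_eq_zero_if_weak_quotients assms(3-5) .
  then show ?thesis
    by (rule rann_A_alg_eq_zero_if_Ann_eq_zero)
qed

end
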